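(* Let $q$ be a prime power, let $n>1$ and $k\ge 1$ with $\gcd(n,k)=1$, and let $f(x)$ be an irreducible polynomial of degree $n$ over $\mathbb{F}_q$. Let $\alpha,\beta\in\mathbb{F}_{q^k}$ with $\alpha\neq 0$, and write $g(x)=f(\alpha x+\beta)=\sum_{i=0}^{n} g_i x^i$. Then $\mathbb{F}_q(g_0,g_1,\ldots,g_n)=\mathbb{F}_{q^k}$ if and only if $\mathbb{F}_q(\alpha,\beta)=\mathbb{F}_{q^k}$.
   Context: For elements $a_1,\dots,a_r$ of a finite extension of $\mathbb{F}_q$, $\mathbb{F}_q(a_1,\ldots,a_r)$ denotes the smallest field containing $\mathbb{F}_q$ and all $a_i$; equivalently, $\mathbb{F}_q(a_1,\dots,a_r)=\mathbb{F}_{q^k}$ (with all $a_i\in\mathbb{F}_{q^k}$) means that for every proper divisor $v$ of $k$ some $a_i\notin\mathbb{F}_{q^v}$. *)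

theory Defs
  imports "HOL-Computational_Algebra.Polynomial" "HOL-Computational_Algebra.Primes" "HOL-Library.Cardinality"
begin

text \<open>Inside an ambient finite field of order q^k, the subfield of order q^v
  (v a divisor of k) is the set of elements fixed by the q^v-th power map.\<close>
definition Fqv :: "nat \<Rightarrow> nat \<Rightarrow> 'a::field set" where
  "Fqv q v = {x. x ^ (q ^ v) = x}"

text \<open>F_q(S) = F_{q^k}: all elements lie in F_{q^k}, and for every proper divisor
  v of k some element lies outside F_{q^v}.\<close>
definition generates :: "nat \<Rightarrow> nat \<Rightarrow> 'a::field set \<Rightarrow> bool" where
  "generates q k S \<longleftrightarrow> S \<subseteq> Fqv q k \<and> (\<forall>v. v dvd k \<and> v \<noteq> k \<longrightarrow> \<not> S \<subseteq> Fqv q v)"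

end

theory Submission
  imports Defs "HOL-Algebra.Algebraic_Closure_Type" "HOL-Number_Theory.Residues"
begin

(* Both sides of the equivalence are statements about the subfields Fqv q v = F_{q^v}
   (v dividing k), so it suffices to show, for each such v, that all coefficients of g lie
   in F_{q^v} iff alpha and beta do.  The "if" direction is immediate, since the q^v-th
   power map is a ring homomorphism fixing the coefficients of f.  For "only if" we work in
   the algebraic closure: a root r of f has Frobenius period exactly n (an irreducible
   polynomial is the minimal polynomial of its roots, and the Frobenius orbit of r is the
   root set of a polynomial over F_q).  Since gcd(n,k) = 1, the roots of g are the n
   distinct conjugates s^(q^(kj)), j < n, of s = (r - beta)/alpha.  The q^v-power map
   permutes them, which forces s and s^(q^k) into F_{q^(vn)}; solving the two affine
   equations alpha s + beta = r, alpha s^(q^k) + beta = r^(q^k) puts alpha and beta into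
   F_{q^(vn)}, and F_{q^(vn)} inter F_{q^k} = F_{q^v}. *)

(* The algebraic closure theory loads HOL-Algebra, whose locale-based notions would
   otherwise shadow the type-class ones used here. *)
hide_const (open) Divisibility.prime Divisibility.irreducible UnivPoly.up_ring.coeff
  UnivPoly.monom Polynomials.lead_coeff Polynomials.degree

text \<open>Ring homomorphisms between type-class rings, as a plain predicate.  The embedding
  of F_q into F_{q^k}, the Frobenius maps and the embedding into the algebraic closure are
  all instances.\<close>
definition rhom :: "('x::comm_ring_1 \<Rightarrow> 'y::comm_ring_1) \<Rightarrow> bool" where
  "rhom h \<longleftrightarrow> h 0 = 0 \<and> h 1 = 1 \<and>
     (\<forall>x y. h (x + y) = h x + h y) \<and> (\<forall>x y. h (x * y) = h x * h y)"

lemma rhomD: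
  assumes "rhom h"
  shows "h 0 = 0" "h 1 = 1" "h (x + y) = h x + h y" "h (x * y) = h x * h y"
  using assms unfolding rhom_def by auto

lemma rhom_minus:
  assumes "rhom h" shows "h (- x) = - h x"
proof -
  have "h x + h (- x) = 0" using rhomD(3)[OF assms, of x "- x"] by (simp add: rhomD[OF assms])
  thus ?thesis by (simp add: eq_neg_iff_add_eq_0 add.commute)
qed

lemma rhom_diff:
  assumes "rhom h" shows "h (x - y) = h x - h y"
  using rhom_minus[OF assms, of y] rhomD(3)[OF assms, of x "- y"] by simp

lemma rhom_sum:
  assumes "rhom h" shows "h (sum f A) = (\<Sum>i\<in>A. h (f i))"
  by (induction A rule: infinite_finite_induct) (auto simp: rhomD[OF assms])

lemma rhom_power:
  assumes "rhom h" shows "h (x ^ n) = h x ^ n"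
  by (induction n) (auto simp: rhomD[OF assms])

lemma rhom_of_nat:
  assumes "rhom h" shows "h (of_nat n) = of_nat n"
  by (induction n) (auto simp: rhomD[OF assms])

lemma rhom_comp:
  assumes "rhom h" "rhom g" shows "rhom (\<lambda>x. g (h x))"
  using assms unfolding rhom_def by auto

lemma rhom_eq_0_iff:
  fixes h :: "'x::field \<Rightarrow> 'y::field"
  assumes "rhom h" shows "h x = 0 \<longleftrightarrow> x = 0"
proof
  assume "h x = 0"
  show "x = 0"
  proof (rule ccontr)
    assume "x \<noteq> 0"
    hence "h x * h (inverse x) = 1" using rhomD(4)[OF assms, of x "inverse x"]
      by (simp add: rhomD[OF assms])
    with \<open>h x = 0\<close> show False by simp
  qed
qed (simp add: rhomD[OF assms])

lemma rhom_inj: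
  fixes h :: "'x::field \<Rightarrow> 'y::field"
  assumes "rhom h" shows "inj h"
proof (rule injI)
  fix x y assume "h x = h y"
  hence "h (x - y) = 0" by (simp add: rhom_diff[OF assms])
  thus "x = y" using rhom_eq_0_iff[OF assms] by simp
qed

lemma rhom_divide:
  fixes h :: "'x::field \<Rightarrow> 'y::field"
  assumes "rhom h" shows "h (x / y) = h x / h y"
proof (cases "y = 0")
  case True thus ?thesis by (simp add: rhomD[OF assms])
next
  case False
  have "h y * h (inverse y) = 1" using rhomD(4)[OF assms, of y "inverse y"] False
    by (simp add: rhomD[OF assms])
  hence "h (inverse y) = inverse (h y)" by (metis inverse_unique)
  thus ?thesis by (simp add: divide_inverse rhomD[OF assms])
qed

lemma rhom_CHAR:
  fixes h :: "'x::field \<Rightarrow> 'y::field"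
  assumes "rhom h" shows "CHAR('y) = CHAR('x)"
proof (rule CHAR_eqI)
  show "of_nat CHAR('x) = (0::'y)"
    using rhom_of_nat[OF assms, of "CHAR('x)"] by (simp add: rhomD[OF assms])
  fix m assume "of_nat m = (0::'y)"
  hence "of_nat m = (0::'x)" using rhom_of_nat[OF assms, of m] rhom_eq_0_iff[OF assms] by metis
  thus "CHAR('x) dvd m" by (simp add: of_nat_eq_0_iff_char_dvd)
qed

lemma map_poly_rhom_add:
  assumes "rhom h" shows "map_poly h (p + q) = map_poly h p + map_poly h q"
  by (intro poly_eqI) (simp add: coeff_map_poly rhomD[OF assms])

lemma map_poly_rhom_mult:
  assumes "rhom h" shows "map_poly h (p * q) = map_poly h p * map_poly h q"
  by (intro poly_eqI) (simp add: coeff_map_poly rhomD[OF assms] coeff_mult rhom_sum[OF assms])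

lemma map_poly_rhom_pcompose:
  assumes "rhom h"
  shows "map_poly h (pcompose p r) = pcompose (map_poly h p) (map_poly h r)"
  by (induction p)
     (simp_all add: pcompose_pCons map_poly_pCons rhomD[OF assms] map_poly_rhom_add[OF assms]
       map_poly_rhom_mult[OF assms])

lemma map_poly_rhom_prod:
  assumes "rhom h" shows "map_poly h (prod f A) = (\<Prod>i\<in>A. map_poly h (f i))"
  by (induction A rule: infinite_finite_induct)
     (auto simp: rhomD[OF assms] map_poly_rhom_mult[OF assms])

lemma poly_map_poly_rhom:
  assumes "rhom h" shows "poly (map_poly h p) (h x) = h (poly p x)"
  by (induction p) (auto simp: map_poly_pCons rhomD[OF assms])

section \<open>The Frobenius map and the subfields Fqv\<close>

text \<open>Throughout, q is a power of the characteristic, so that x \<mapsto> x^(q^t) (the t-th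
  iterate of the q-Frobenius) is a ring endomorphism.\<close>
lemma frob_rhom:
  assumes "prime CHAR('x::comm_ring_1)" "q = CHAR('x) ^ e"
  shows "rhom (\<lambda>x::'x. x ^ (q ^ t))"
proof -
  have N: "q ^ t = CHAR('x) ^ (e * t)" by (simp add: assms(2) power_mult)
  have "0 < q ^ t" using assms prime_gt_0_nat by simp
  moreover have "(x + y) ^ (q ^ t) = x ^ (q ^ t) + y ^ (q ^ t)" for x y :: 'x
    by (rule freshmans_dream'[OF assms(1) N])
  ultimately show ?thesis unfolding rhom_def by (simp add: power_mult_distrib zero_power)
qed

lemma frob_inj:
  fixes x y :: "'x::field"
  assumes "prime CHAR('x)" "q = CHAR('x) ^ e" "x ^ (q ^ t) = y ^ (q ^ t)"
  shows "x = y"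
  using rhom_inj[OF frob_rhom[OF assms(1,2)]] assms(3) by (auto dest: injD)

lemma poly_frob:
  fixes x :: "'x::comm_ring_1"
  assumes "prime CHAR('x)" "q = CHAR('x) ^ e" "\<And>i. coeff P i ^ (q ^ t) = coeff P i"
  shows "poly P (x ^ (q ^ t)) = poly P x ^ (q ^ t)"
proof -
  have h: "rhom (\<lambda>x::'x. x ^ (q ^ t))" by (rule frob_rhom[OF assms(1,2)])
  have "map_poly (\<lambda>x. x ^ (q ^ t)) P = P"
    by (intro poly_eqI) (simp add: coeff_map_poly rhomD[OF h] assms(3))
  thus ?thesis using poly_map_poly_rhom[OF h, of P x] by simp
qed

lemma pow_pow_add: "(x::'x::monoid_mult) ^ (q ^ (a + b)) = (x ^ (q ^ a)) ^ (q ^ b)"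
  by (simp add: power_add power_mult)

lemma frob_eq_mult:
  fixes x :: "'x::monoid_mult"
  assumes "x ^ (q ^ v) = x ^ (q ^ w)"
  shows "x ^ (q ^ (v * m)) = x ^ (q ^ (w * m))"
proof (induction m)
  case (Suc m)
  have "x ^ (q ^ (v * Suc m)) = (x ^ (q ^ v)) ^ (q ^ (v * m))"
    by (simp only: mult_Suc_right pow_pow_add)
  also have "\<dots> = (x ^ (q ^ w)) ^ (q ^ (v * m))" using assms by simp
  also have "\<dots> = (x ^ (q ^ (v * m))) ^ (q ^ w)" by (simp only: pow_pow_add[symmetric] add.commute)
  also have "\<dots> = x ^ (q ^ (w * Suc m))"
    using Suc by (simp only: pow_pow_add[symmetric] mult_Suc_right add.commute)
  finally show ?case .
qed simp

lemma Fqv_mult: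
  assumes "x \<in> Fqv q a" shows "x \<in> Fqv q (a * t)"
proof (induction t)
  case (Suc t)
  have "x ^ (q ^ (a * Suc t)) = (x ^ (q ^ a)) ^ (q ^ (a * t))"
    by (metis mult_Suc_right pow_pow_add)
  thus ?case using Suc assms unfolding Fqv_def by simp
qed (simp add: Fqv_def)

text \<open>Fqv q a \<inter> Fqv q b \<subseteq> Fqv q (gcd a b), by the Bezout identity for the exponents.\<close>
lemma Fqv_gcd:
  assumes "x \<in> Fqv q a" "x \<in> Fqv q b" "a > 0"
  shows "x \<in> Fqv q (gcd a b)"
proof -
  obtain u w where uw: "a * u = b * w + gcd a b" using bezout_nat[of a b] assms(3) by auto
  have "x = x ^ (q ^ (a * u))" using Fqv_mult[OF assms(1)] unfolding Fqv_def by simp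
  also have "\<dots> = (x ^ (q ^ (b * w))) ^ (q ^ gcd a b)" by (simp only: uw pow_pow_add)
  also have "\<dots> = x ^ (q ^ gcd a b)" using Fqv_mult[OF assms(2)] unfolding Fqv_def by simp
  finally show ?thesis unfolding Fqv_def by simp
qed

lemma Fqv_field_ops:
  fixes x y :: "'x::field"
  assumes "prime CHAR('x)" "q = CHAR('x) ^ e" "x \<in> Fqv q t" "y \<in> Fqv q t"
  shows "x - y \<in> Fqv q t" "x * y \<in> Fqv q t" "x / y \<in> Fqv q t"
  using assms(3,4) unfolding Fqv_def
  by (simp_all add: rhom_diff[OF frob_rhom[OF assms(1,2)]] rhomD(4)[OF frob_rhom[OF assms(1,2)]]
      rhom_divide[OF frob_rhom[OF assms(1,2)]])

lemma Fqv_frob: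
  fixes x :: "'x::field"
  assumes "x \<in> Fqv q N" shows "x ^ (q ^ t) \<in> Fqv q N"
proof -
  have "(x ^ (q ^ t)) ^ (q ^ N) = (x ^ (q ^ N)) ^ (q ^ t)"
    by (simp only: pow_pow_add[symmetric] add.commute)
  thus ?thesis using assms by (simp add: Fqv_def)
qed

lemma Fqv_coprime:
  assumes "x \<in> Fqv q (v * n)" "x \<in> Fqv q k" "v dvd k" "coprime n k" "n > 0" "k > 0"
  shows "x \<in> Fqv q v"
proof -
  obtain k' where k': "k = v * k'" using assms(3) by (auto elim: dvdE)
  have "coprime n k'" using assms(4) unfolding k' by simp
  hence "gcd (v * n) k = v" unfolding k' by (simp add: gcd_mult_distrib_nat[symmetric])
  moreover have "v * n > 0" using assms(5,6) k' by simp
  ultimately show ?thesis using Fqv_gcd[OF assms(1,2)] by simp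
qed

text \<open>Fermat's little theorem for a finite field: multiplication by a unit x permutes the
  nonzero elements, so x^(|F| - 1) = 1.\<close>
lemma ff_card_pow:
  fixes x :: "'x::{field,finite}"
  shows "x ^ CARD('x) = x"
proof (cases "x = 0")
  case True
  moreover have "CARD('x) > 0" using finite_UNIV_card_ge_0[where ?'a = 'x] by simp
  ultimately show ?thesis by (simp add: zero_power)
next
  case False
  let ?U = "UNIV - {0::'x}"
  have "(\<Prod>y\<in>?U. x * y) = (\<Prod>y\<in>?U. y)"
    by (rule prod.reindex_bij_witness[of _ "\<lambda>y. y / x" "\<lambda>y. x * y"]) (use False in auto)
  moreover have "(\<Prod>y\<in>?U. x * y) = x ^ card ?U * (\<Prod>y\<in>?U. y)"
    by (simp only: prod.distrib prod_constant)
  moreover have "(\<Prod>y\<in>?U. y) \<noteq> 0" by simp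
  ultimately have "x ^ card ?U = 1" by (metis mult_cancel_right2)
  have card: "CARD('x) = Suc (card ?U)"
    using card_Diff_singleton[of 0 "UNIV :: 'x set"] finite_UNIV_card_ge_0[where ?'a = 'x] by simp
  have "x ^ CARD('x) = x ^ card ?U * x" by (simp only: card power_Suc2)
  also have "\<dots> = x" using \<open>x ^ card ?U = 1\<close> by simp
  finally show ?thesis .
qed

lemma ff_card_pow_pow:
  fixes x :: "'x::{field,finite}"
  shows "x ^ (CARD('x) ^ t) = x"
  by (induction t) (simp_all add: ff_card_pow power_mult flip: power_Suc2)

lemma Fqv_card:
  fixes x :: "'x::{field,finite}"
  assumes "CARD('x) = q ^ k" shows "x \<in> Fqv q k"
  using ff_card_pow[of x] assms unfolding Fqv_def by simp

lemma CHAR_prime_power_card: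
  assumes "CARD('x::{field,finite}) = p ^ e" "prime p" "e > 0"
  shows "CHAR('x) = p"
proof -
  have prx: "prime CHAR('x)" by (rule prime_CHAR_semidom[OF finite_imp_CHAR_pos]) simp
  have "CHAR('x) dvd p ^ e" using CHAR_dvd_CARD[where ?'a='x] assms(1) by simp
  hence "CHAR('x) dvd p" using prime_dvd_power_iff assms(3) prx by blast
  thus ?thesis using prx assms(2) primes_dvd_imp_eq by blast
qed

lemma coeff_map_poly_fixed:
  fixes \<psi> :: "'b::{field,finite} \<Rightarrow> 'c::field"
  assumes "rhom \<psi>"
  shows "coeff (map_poly \<psi> P) i ^ (CARD('b) ^ t) = coeff (map_poly \<psi> P) i"
  by (simp add: coeff_map_poly rhomD[OF assms] flip: rhom_power[OF assms] add: ff_card_pow_pow)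

text \<open>Conversely, inside any field containing F_q, the elements fixed by the q-Frobenius
  are exactly F_q: they are roots of x^q - x, which has at most q roots.\<close>
lemma fixed_in_range:
  fixes \<psi> :: "'b::{field,finite} \<Rightarrow> 'c::field"
  assumes h: "rhom \<psi>" and x: "x ^ CARD('b) = x"
  shows "x \<in> range \<psi>"
proof -
  let ?q = "CARD('b)"
  have "card {0::'b, 1} \<le> ?q" by (rule card_mono) auto
  hence q2: "?q \<ge> 2" by simp
  define P :: "'c poly" where "P = monom 1 ?q - monom 1 1"
  have polyP: "poly P y = y ^ ?q - y" for y by (simp add: P_def poly_monom)
  have "coeff P ?q = 1" using q2 by (simp add: P_def coeff_monom)
  hence P0: "P \<noteq> 0" by auto
  have degP: "degree P \<le> ?q" unfolding P_def
    by (rule order.trans[OF degree_diff_le_max])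
       (use q2 in \<open>auto simp: degree_monom_le degree_monom_eq\<close>)
  let ?A = "{y. poly P y = 0}"
  have sub: "range \<psi> \<subseteq> ?A"
    using coeff_map_poly_fixed[OF h, of "[:_:]" 0 1] by (auto simp: polyP coeff_map_poly rhomD[OF h])
  have "card (range \<psi>) = ?q" using card_image[OF rhom_inj[OF h]] by simp
  hence "range \<psi> = ?A"
    using card_seteq[OF poly_roots_finite[OF P0] sub] card_poly_roots_bound[OF P0] degP by simp
  moreover have "x \<in> ?A" using x by (simp add: polyP)
  ultimately show ?thesis by simp
qed

section \<open>Irreducible polynomials are minimal polynomials\<close>

text \<open>If an irreducible f and a nonzero P over a field have a common root r in an
  extension, then deg f \<le> deg P.  By induction on deg P: if f mod P \<noteq> 0 it is a
  smaller polynomial vanishing at r, and if P divides f then P is a unit or an associate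
  of f.\<close>
lemma irreducible_degree_le:
  fixes f P :: "'b::field poly" and \<psi> :: "'b \<Rightarrow> 'c::field"
  assumes h: "rhom \<psi>" and irr: "irreducible f"
    and rf: "poly (map_poly \<psi> f) r = 0" and rP: "poly (map_poly \<psi> P) r = 0" and P: "P \<noteq> 0"
  shows "degree f \<le> degree P"
  using rP P
proof (induction "degree P" arbitrary: P rule: less_induct)
  case less
  let ?ev = "\<lambda>Q. poly (map_poly \<psi> Q) r"
  have "map_poly \<psi> f = map_poly \<psi> P * map_poly \<psi> (f div P) + map_poly \<psi> (f mod P)"
    by (simp flip: map_poly_rhom_add[OF h] map_poly_rhom_mult[OF h])
  hence ev_mod: "?ev (f mod P) = 0" using rf less.prems(1) by simp
  show ?case
  proof (cases "f mod P = 0")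
    case True
    hence fP: "f = P * (f div P)" using mult_div_mod_eq[of P f] by simp
    from Factorial_Ring.irreducibleD[OF irr fP] show ?thesis
    proof
      assume "is_unit P"
      hence "degree P = 0" using less.prems(2) is_unit_iff_degree by blast
      hence P_const: "P = [:coeff P 0:]" by (simp add: degree_0_id)
      hence "coeff P 0 \<noteq> 0" using less.prems(2) by auto
      hence "?ev P \<noteq> 0"
        by (subst P_const) (simp add: map_poly_pCons rhomD[OF h] rhom_eq_0_iff[OF h])
      thus ?thesis using less.prems(1) by contradiction
    next
      assume "is_unit (f div P)"
      moreover have "f div P \<noteq> 0" using fP irr by auto
      ultimately have "degree (f div P) = 0" using is_unit_iff_degree by blast
      moreover have "degree f = degree P + degree (f div P)"
        by (subst fP) (rule degree_mult_eq[OF less.prems(2) \<open>f div P \<noteq> 0\<close>])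
      ultimately show ?thesis by simp
    qed
  next
    case False
    have "degree (f mod P) < degree P" using degree_mod_less[OF less.prems(2), of f] False by simp
    thus ?thesis using less.hyps[OF _ ev_mod False] by simp
  qed
qed

section \<open>Frobenius orbits\<close>

lemma frob_cancel:
  fixes r :: "'x::field"
  assumes pr: "prime CHAR('x)" and q: "q = CHAR('x) ^ e"
    and eq: "r ^ (q ^ (a + b)) = r ^ (q ^ b)"
  shows "r ^ (q ^ a) = r"
  by (rule frob_inj[OF pr q, where t = b]) (use eq in \<open>simp add: pow_pow_add\<close>)

lemma frob_returns:
  fixes r :: "'x::field"
  assumes pr: "prime CHAR('x)" and q: "q = CHAR('x) ^ e"
    and fin: "finite (range (\<lambda>i. r ^ (q ^ i)))"
  shows "\<exists>m>0. r ^ (q ^ m) = r"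
proof -
  have "\<not> inj (\<lambda>i. r ^ (q ^ i))" using fin finite_imageD infinite_UNIV_nat by blast
  then obtain i j where "i < j" "r ^ (q ^ i) = r ^ (q ^ j)"
    unfolding inj_def by (metis linorder_neqE_nat)
  hence "r ^ (q ^ ((j - i) + i)) = r ^ (q ^ i)" by simp
  hence "r ^ (q ^ (j - i)) = r" by (rule frob_cancel[OF pr q])
  thus ?thesis using \<open>i < j\<close> by (intro exI[of _ "j - i"]) simp
qed

lemma frob_period:
  fixes r :: "'x::field"
  assumes pr: "prime CHAR('x)" and q: "q = CHAR('x) ^ e"
    and ret: "\<exists>m>0. r ^ (q ^ m) = r"
  obtains d where "d > 0" "\<And>m. r ^ (q ^ m) = r \<longleftrightarrow> d dvd m"
    "\<And>m. r ^ (q ^ m) = r ^ (q ^ (m mod d))"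
proof -
  define d where "d = (LEAST m. 0 < m \<and> r ^ (q ^ m) = r)"
  have d: "0 < d" "r ^ (q ^ d) = r" using LeastI_ex[OF ret] unfolding d_def by auto
  have dmin: "d \<le> m" if "0 < m" "r ^ (q ^ m) = r" for m
    using that unfolding d_def by (intro Least_le) simp
  have red: "r ^ (q ^ m) = r ^ (q ^ (m mod d))" for m
  proof -
    have "r ^ (q ^ (d * (m div d))) = r" using Fqv_mult[of r q d] d(2) unfolding Fqv_def by simp
    hence "r ^ (q ^ (m mod d + d * (m div d))) = r ^ (q ^ (m mod d))"
      by (metis add.commute pow_pow_add)
    thus ?thesis by (simp add: add.commute)
  qed
  have "r ^ (q ^ m) = r \<longleftrightarrow> d dvd m" for m
  proof
    assume "r ^ (q ^ m) = r"
    hence "r ^ (q ^ (m mod d)) = r" using red by simp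
    hence "\<not> 0 < m mod d" using dmin mod_less_divisor[OF d(1), of m] by (meson leD)
    thus "d dvd m" by (simp add: mod_greater_zero_iff_not_dvd)
  next
    assume "d dvd m" thus "r ^ (q ^ m) = r" using Fqv_mult[of r q d] d(2) unfolding Fqv_def by auto
  qed
  thus thesis using that d(1) red by blast
qed

lemma frob_distinct:
  fixes r :: "'x::field"
  assumes pr: "prime CHAR('x)" and q: "q = CHAR('x) ^ e"
    and per: "\<And>m. r ^ (q ^ m) = r \<longleftrightarrow> d dvd m"
    and ij: "i < j" "\<not> d dvd (j - i)"
  shows "r ^ (q ^ i) \<noteq> r ^ (q ^ j)"
proof
  assume "r ^ (q ^ i) = r ^ (q ^ j)"
  hence "r ^ (q ^ ((j - i) + i)) = r ^ (q ^ i)" using ij(1) by simp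
  hence "r ^ (q ^ (j - i)) = r" by (rule frob_cancel[OF pr q])
  thus False using per ij(2) by simp
qed

lemma stable_roots_poly_descends:
  fixes \<psi> :: "'b::{field,finite} \<Rightarrow> 'c::field" and S :: "'c set"
  assumes h: "rhom \<psi>" and pr: "prime CHAR('c)" and q: "CARD('b) = CHAR('c) ^ e"
    and fin: "finite S" and stable: "(\<lambda>x. x ^ CARD('b)) ` S \<subseteq> S"
  obtains H0 where "map_poly \<psi> H0 = (\<Prod>y\<in>S. [:- y, 1:])"
proof -
  let ?\<sigma> = "\<lambda>x::'c. x ^ CARD('b)"
  define H where "H = (\<Prod>y\<in>S. [:- y, 1:])"
  have fr: "rhom ?\<sigma>" using frob_rhom[OF pr q, of 1] by simp
  have perm: "?\<sigma> ` S = S"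
    using endo_inj_surj[OF fin stable inj_on_subset[OF rhom_inj[OF fr] subset_UNIV]] .
  have "map_poly ?\<sigma> H = (\<Prod>y\<in>S. [:- ?\<sigma> y, 1:])"
    unfolding H_def map_poly_rhom_prod[OF fr]
    by (intro prod.cong refl) (simp add: map_poly_pCons rhomD[OF fr] rhom_minus[OF fr])
  also have "\<dots> = (\<Prod>y\<in>?\<sigma> ` S. [:- y, 1:])"
    using prod.reindex[OF inj_on_subset[OF rhom_inj[OF fr] subset_UNIV], of "\<lambda>y. [:- y, 1:]" S]
    by (simp add: comp_def)
  finally have Hfix: "map_poly ?\<sigma> H = H" unfolding perm H_def .
  have coeffH: "coeff H i \<in> range \<psi>" for i
  proof (rule fixed_in_range[OF h])
    show "coeff H i ^ CARD('b) = coeff H i"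
      using arg_cong[OF Hfix, of "\<lambda>P. coeff P i"] by (simp add: coeff_map_poly)
  qed
  have "map_poly \<psi> (map_poly (inv_into UNIV \<psi>) H) = H"
    by (intro poly_eqI) (simp add: coeff_map_poly rhomD[OF h] f_inv_into_f[OF coeffH]
        inv_into_f_eq[OF rhom_inj[OF h]])
  thus thesis unfolding H_def by (rule that)
qed

lemma frob_orbit:
  fixes r :: "'x::field"
  assumes pr: "prime CHAR('x)" and q: "q = CHAR('x) ^ e"
    and fin: "finite (range (\<lambda>i. r ^ (q ^ i)))"
  obtains d where "d > 0" "\<And>m. r ^ (q ^ m) = r \<longleftrightarrow> d dvd m"
    "card ((\<lambda>i. r ^ (q ^ i)) ` {..<d}) = d"
    "(\<lambda>x. x ^ q) ` (\<lambda>i. r ^ (q ^ i)) ` {..<d} \<subseteq> (\<lambda>i. r ^ (q ^ i)) ` {..<d}"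
proof -
  obtain d where d: "d > 0" "\<And>m. r ^ (q ^ m) = r \<longleftrightarrow> d dvd m"
    "\<And>m. r ^ (q ^ m) = r ^ (q ^ (m mod d))"
    using frob_period[OF pr q frob_returns[OF pr q fin]] by blast
  have distinct: "r ^ (q ^ i) \<noteq> r ^ (q ^ j)" if "i < j" "j < d" for i j
    using frob_distinct[OF pr q d(2) that(1)] that by (simp add: nat_dvd_not_less)
  have "inj_on (\<lambda>i. r ^ (q ^ i)) {..<d}"
  proof (rule inj_onI)
    fix i j assume "i \<in> {..<d}" "j \<in> {..<d}" "r ^ (q ^ i) = r ^ (q ^ j)"
    thus "i = j" using distinct[of i j] distinct[of j i] by (cases i j rule: linorder_cases) auto
  qed
  hence "card ((\<lambda>i. r ^ (q ^ i)) ` {..<d}) = d" by (simp add: card_image)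
  moreover have "(\<lambda>x. x ^ q) ` (\<lambda>i. r ^ (q ^ i)) ` {..<d} \<subseteq> (\<lambda>i. r ^ (q ^ i)) ` {..<d}"
  proof
    fix y assume "y \<in> (\<lambda>x. x ^ q) ` (\<lambda>i. r ^ (q ^ i)) ` {..<d}"
    then obtain i where "y = (r ^ (q ^ i)) ^ q" by auto
    hence "y = r ^ (q ^ Suc i)" by (simp only: power_Suc2 power_mult)
    hence "y = r ^ (q ^ (Suc i mod d))" using d(3)[of "Suc i"] by simp
    thus "y \<in> (\<lambda>i. r ^ (q ^ i)) ` {..<d}" using d(1) by simp
  qed
  ultimately show thesis using that d(1,2) by blast
qed

text \<open>A root r of an irreducible polynomial f of degree n over F_q has Frobenius period
  exactly n: its orbit consists of at most n roots of f, and it is the root set of a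
  polynomial over F_q, which must have degree at least n.\<close>
lemma root_period:
  fixes \<psi> :: "'b::{field,finite} \<Rightarrow> 'c::field" and f :: "'b poly"
  assumes h: "rhom \<psi>" and pr: "prime CHAR('c)" and q: "CARD('b) = CHAR('c) ^ e"
    and irr: "irreducible f" and deg: "degree f = n"
    and r: "poly (map_poly \<psi> f) r = 0"
  shows "r ^ (CARD('b) ^ m) = r \<longleftrightarrow> n dvd m"
proof -
  let ?q = "CARD('b)" and ?R = "{x. poly (map_poly \<psi> f) x = 0}"
  have F0: "map_poly \<psi> f \<noteq> 0" using irr rhom_eq_0_iff[OF h] by (auto simp: map_poly_eq_0_iff)
  have roots: "card ?R \<le> n" "finite ?R"
    using card_poly_roots_bound[OF F0] poly_roots_finite[OF F0] rhom_eq_0_iff[OF h] deg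
    by (auto simp: degree_map_poly)
  have orbit_roots: "r ^ (?q ^ t) \<in> ?R" for t
    using poly_frob[OF pr q coeff_map_poly_fixed[OF h], where t = t and x = r] r by (simp add: zero_power)
  hence "range (\<lambda>i. r ^ (?q ^ i)) \<subseteq> ?R" by blast
  then obtain d where d: "d > 0" "\<And>m. r ^ (?q ^ m) = r \<longleftrightarrow> d dvd m"
    and cardO: "card ((\<lambda>i. r ^ (?q ^ i)) ` {..<d}) = d"
    and stable: "(\<lambda>x. x ^ ?q) ` (\<lambda>i. r ^ (?q ^ i)) ` {..<d} \<subseteq> (\<lambda>i. r ^ (?q ^ i)) ` {..<d}"
    using frob_orbit[OF pr q finite_subset[OF _ roots(2)]] by blast
  define Orb where "Orb = (\<lambda>i. r ^ (?q ^ i)) ` {..<d}"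
  have "Orb \<subseteq> ?R" unfolding Orb_def by (rule image_subsetI) (rule orbit_roots)
  hence "d \<le> n" using card_mono[OF roots(2), of Orb] cardO roots(1) unfolding Orb_def by linarith
  have finO: "finite Orb" unfolding Orb_def by simp
  obtain H0 where H0: "map_poly \<psi> H0 = (\<Prod>y\<in>Orb. [:- y, 1:])"
    using stable_roots_poly_descends[OF h pr q finO stable[folded Orb_def]] by blast
  have "degree (map_poly \<psi> H0) = (\<Sum>y\<in>Orb. degree [:- y, 1:])"
    unfolding H0 by (rule degree_prod_eq_sum_degree) auto
  hence degH0: "degree H0 = d" using cardO by (simp add: Orb_def degree_map_poly rhom_eq_0_iff[OF h])
  have "map_poly \<psi> H0 \<noteq> 0" unfolding H0 using finO by (simp add: prod_zero_iff)
  hence H0_nz: "H0 \<noteq> 0" by auto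
  have "r \<in> Orb" using d(1) unfolding Orb_def by (auto intro!: image_eqI[of _ _ 0])
  hence "poly (map_poly \<psi> H0) r = 0" unfolding H0 poly_prod using finO by (auto intro: prod_zero)
  hence "n \<le> d" using irreducible_degree_le[OF h irr r _ H0_nz] deg degH0 by simp
  thus ?thesis using \<open>d \<le> n\<close> d(2) by simp
qed

section \<open>Roots of an affine substitution\<close>

lemma roots_eq_image:
  fixes G :: "'c::field poly"
  assumes G0: "G \<noteq> 0" and deg: "degree G \<le> n" and inj: "inj_on \<rho> {..<n}"
    and roots: "\<And>j. j < n \<Longrightarrow> poly G (\<rho> j) = 0"
  shows "{x. poly G x = 0} = \<rho> ` {..<n}"
proof (rule card_seteq[symmetric])
  show "finite {x. poly G x = 0}" by (rule poly_roots_finite[OF G0])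
  show "\<rho> ` {..<n} \<subseteq> {x. poly G x = 0}" using roots by auto
  show "card {x. poly G x = 0} \<le> card (\<rho> ` {..<n})"
    using card_poly_roots_bound[OF G0] deg card_image[OF inj] by simp
qed

lemma affine_substitution_roots:
  fixes F :: "'c::field poly" and a b r :: 'c
  assumes pr: "prime CHAR('c)" and q: "q = CHAR('c) ^ e"
    and degF: "degree F = n" and n0: "n > 0" and cop: "coprime n k"
    and Ffix: "\<And>i t. coeff F i ^ (q ^ t) = coeff F i"
    and r: "poly F r = 0" and per: "\<And>m. r ^ (q ^ m) = r \<longleftrightarrow> n dvd m"
    and a0: "a \<noteq> 0" and ak: "a \<in> Fqv q k" and bk: "b \<in> Fqv q k"
  shows "\<And>j. ((r - b) / a) ^ (q ^ (k * j)) = (r ^ (q ^ (k * j)) - b) / a"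
    and "{x. poly (pcompose F [:b, a:]) x = 0} = (\<lambda>j. ((r - b) / a) ^ (q ^ (k * j))) ` {..<n}"
proof -
  show conj: "((r - b) / a) ^ (q ^ (k * j)) = (r ^ (q ^ (k * j)) - b) / a" for j
    using Fqv_mult[OF ak, of j] Fqv_mult[OF bk, of j] unfolding Fqv_def
    by (simp add: rhom_divide[OF frob_rhom[OF pr q]] rhom_diff[OF frob_rhom[OF pr q]])
  have distinct: "r ^ (q ^ (k * i)) \<noteq> r ^ (q ^ (k * j))" if "i < j" "j < n" for i j
  proof (rule frob_distinct[OF pr q per])
    show "k * i < k * j" using that cop by (cases "k = 0") auto
    have "\<not> n dvd (j - i)" using that by (simp add: nat_dvd_not_less)
    thus "\<not> n dvd (k * j - k * i)"
      using cop by (simp add: coprime_dvd_mult_right_iff flip: diff_mult_distrib2)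
  qed
  have "inj_on (\<lambda>j. ((r - b) / a) ^ (q ^ (k * j))) {..<n}"
  proof (rule inj_onI)
    fix i j assume "i \<in> {..<n}" "j \<in> {..<n}"
      and "((r - b) / a) ^ (q ^ (k * i)) = ((r - b) / a) ^ (q ^ (k * j))"
    hence "i \<in> {..<n}" "j \<in> {..<n}" "r ^ (q ^ (k * i)) = r ^ (q ^ (k * j))"
      using a0 by (simp_all add: conj divide_cancel_right)
    thus "i = j" using distinct[of i j] distinct[of j i] by (cases i j rule: linorder_cases) auto
  qed
  moreover have "q > 0" using pr q prime_gt_0_nat by simp
  hence "poly (pcompose F [:b, a:]) (((r - b) / a) ^ (q ^ (k * j))) = 0" for j
    using poly_frob[OF pr q Ffix, where t = "k * j" and x = r] r a0 by (simp add: conj poly_pcompose zero_power)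
  moreover have "degree (pcompose F [:b, a:]) = n" using degF a0 by (simp add: degree_pcompose)
  moreover from this have "pcompose F [:b, a:] \<noteq> 0" using n0 by auto
  ultimately show "{x. poly (pcompose F [:b, a:]) x = 0} = (\<lambda>j. ((r - b) / a) ^ (q ^ (k * j))) ` {..<n}"
    by (intro roots_eq_image) auto
qed

lemma affine_coeffs_in_Fqv:
  fixes a b s s1 :: "'x::field"
  assumes pr: "prime CHAR('x)" and q: "q = CHAR('x) ^ e"
    and s: "s \<in> Fqv q N" "s1 \<in> Fqv q N" "s \<noteq> s1"
    and img: "a * s + b \<in> Fqv q N" "a * s1 + b \<in> Fqv q N"
  shows "a \<in> Fqv q N \<and> b \<in> Fqv q N"
proof -
  have "a = ((a * s + b) - (a * s1 + b)) / (s - s1)" using s(3) by (simp add: field_simps)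
  hence a: "a \<in> Fqv q N" by (metis Fqv_field_ops(1,3)[OF pr q] s(1,2) img)
  have "b = (a * s + b) - a * s" by simp
  hence "b \<in> Fqv q N" by (metis Fqv_field_ops(1,2)[OF pr q] a s(1) img(1))
  with a show ?thesis ..
qed

text \<open>The q^v-power map permutes the roots of
  G = F(a x + b), so s^(q^v) = s^(q^(k j0)) for some j0, whence s and s^(q^k) lie in
  Fqv q (v n); hence so do a and b, and Fqv q (v n) \<inter> Fqv q k = Fqv q v.\<close>
lemma affine_shift_in_Fqv:
  fixes F :: "'c::field poly" and a b r :: 'c
  assumes pr: "prime CHAR('c)" and q: "q = CHAR('c) ^ e"
    and degF: "degree F = n" and n: "n > 1" and cop: "coprime n k"
    and Ffix: "\<And>i t. coeff F i ^ (q ^ t) = coeff F i"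
    and r: "poly F r = 0" and per: "\<And>m. r ^ (q ^ m) = r \<longleftrightarrow> n dvd m"
    and a0: "a \<noteq> 0" and ak: "a \<in> Fqv q k" and bk: "b \<in> Fqv q k"
    and v: "v dvd k" and Gfix: "\<And>i. coeff (pcompose F [:b, a:]) i \<in> Fqv q v"
  shows "a \<in> Fqv q v \<and> b \<in> Fqv q v"
proof -
  define s where "s = (r - b) / a"
  have n0: "n > 0" using n by simp
  have q0: "q > 0" using pr q prime_gt_0_nat by simp
  note conj = affine_substitution_roots(1)[OF pr q degF n0 cop Ffix r per a0 ak bk, folded s_def]
  note roots = affine_substitution_roots(2)[OF pr q degF n0 cop Ffix r per a0 ak bk, folded s_def]
  have "s \<in> (\<lambda>j. s ^ (q ^ (k * j))) ` {..<n}" using n0 by (auto intro!: image_eqI[of _ _ 0])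
  hence "poly (pcompose F [:b, a:]) s = 0" unfolding roots[symmetric] by simp
  hence "poly (pcompose F [:b, a:]) (s ^ (q ^ v)) = 0"
    using poly_frob[OF pr q, where t = v and x = s] Gfix q0 unfolding Fqv_def by (simp add: zero_power)
  then obtain j0 where "s ^ (q ^ v) = s ^ (q ^ (k * j0))" using roots by auto
  hence "s ^ (q ^ (v * n)) = s ^ (q ^ (k * (j0 * n)))" using frob_eq_mult[of s q v "k * j0" n]
    by (simp add: mult.assoc)
  also have "\<dots> = s" using per[of "k * (j0 * n)"] conj[of "j0 * n"] by (simp add: s_def)
  finally have s_fix: "s \<in> Fqv q (v * n)" by (simp add: Fqv_def)
  have r_fix: "r \<in> Fqv q (v * n)" using per[of "v * n"] unfolding Fqv_def by simp
  have "r ^ (q ^ k) \<noteq> r"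
  proof
    assume "r ^ (q ^ k) = r"
    hence "n dvd gcd n k" using per by simp
    thus False using cop n by simp
  qed
  hence "s \<noteq> s ^ (q ^ k)" using conj[of 1] a0 by (auto simp: s_def divide_cancel_right)
  moreover have "a * s + b \<in> Fqv q (v * n)" "a * s ^ (q ^ k) + b \<in> Fqv q (v * n)"
    using r_fix Fqv_frob[OF r_fix, of k] conj[of 1] a0 by (simp_all add: s_def)
  ultimately have ab: "a \<in> Fqv q (v * n) \<and> b \<in> Fqv q (v * n)"
    using affine_coeffs_in_Fqv[OF pr q s_fix Fqv_frob[OF s_fix]] by blast
  have "k > 0" using v cop n by (cases "k = 0") auto
  thus ?thesis using Fqv_coprime[OF _ _ v cop n0] ab ak bk by blast
qed

text \<open>If alpha and beta lie in F_{q^v}, so do the coefficients of g, because the q^v-power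
  map is a ring endomorphism fixing f, alpha and beta.\<close>
lemma shift_in_Fqv_imp_coeffs:
  fixes \<phi> :: "'b::{field,finite} \<Rightarrow> 'a::field"
  assumes h: "rhom \<phi>" and pr: "prime CHAR('a)" and qe: "CARD('b) = CHAR('a) ^ e"
    and \<alpha>: "\<alpha> \<in> Fqv CARD('b) v" and \<beta>: "\<beta> \<in> Fqv CARD('b) v"
  shows "coeff (pcompose (map_poly \<phi> f) [:\<beta>, \<alpha>:]) i \<in> Fqv CARD('b) v"
proof -
  let ?\<sigma> = "\<lambda>x::'a. x ^ (CARD('b) ^ v)"
  have fr: "rhom ?\<sigma>" by (rule frob_rhom[OF pr qe])
  have "map_poly ?\<sigma> (map_poly \<phi> f) = map_poly \<phi> f"
  proof (rule poly_eqI)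
    fix i
    show "coeff (map_poly ?\<sigma> (map_poly \<phi> f)) i = coeff (map_poly \<phi> f) i"
      using coeff_map_poly_fixed[OF h, of f i v] by (subst coeff_map_poly) (simp_all add: rhomD[OF fr])
  qed
  moreover have "map_poly ?\<sigma> [:\<beta>, \<alpha>:] = [:\<beta>, \<alpha>:]"
    using \<alpha> \<beta> unfolding Fqv_def by (simp add: map_poly_pCons rhomD[OF fr])
  ultimately have "map_poly ?\<sigma> (pcompose (map_poly \<phi> f) [:\<beta>, \<alpha>:]) =
      pcompose (map_poly \<phi> f) [:\<beta>, \<alpha>:]"
    by (simp add: map_poly_rhom_pcompose[OF fr])
  from arg_cong[OF this, of "\<lambda>P. coeff P i"] show ?thesis
    unfolding Fqv_def by (simp add: coeff_map_poly rhomD[OF fr])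
qed

lemma to_ac_Fqv_iff: "to_ac x \<in> Fqv q t \<longleftrightarrow> (x :: 'a::field) \<in> Fqv q t"
  unfolding Fqv_def by (simp flip: to_ac_power)

text \<open>Conversely, if the coefficients of g lie in F_{q^v} then so do alpha and beta: pass to
  the algebraic closure, where f has a root of Frobenius period n.\<close>
lemma coeffs_in_Fqv_imp_shift:
  fixes \<phi> :: "'b::{field,finite} \<Rightarrow> 'a::{field,finite}" and f :: "'b poly" and \<alpha> \<beta> :: 'a
  assumes h: "rhom \<phi>" and pr: "prime CHAR('a)" and qe: "CARD('b) = CHAR('a) ^ e"
    and card_a: "CARD('a) = CARD('b) ^ k"
    and n: "n > 1" and cop: "coprime n k"
    and irr: "irreducible f" and deg: "degree f = n" and \<alpha>0: "\<alpha> \<noteq> 0"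
    and v: "v dvd k"
    and gv: "\<And>i. coeff (pcompose (map_poly \<phi> f) [:\<beta>, \<alpha>:]) i \<in> Fqv CARD('b) v"
  shows "\<alpha> \<in> Fqv CARD('b) v \<and> \<beta> \<in> Fqv CARD('b) v"
proof -
  define \<psi> where "\<psi> = (\<lambda>x. (to_ac (\<phi> x) :: 'a alg_closure))"
  have h\<psi>: "rhom \<psi>" unfolding \<psi>_def by (rule rhom_comp[OF h]) (simp add: rhom_def)
  have prC: "prime CHAR('a alg_closure)" and qC: "CARD('b) = CHAR('a alg_closure) ^ e"
    using pr qe by simp_all
  have degF: "degree (map_poly \<psi> f) = n"
    using deg by (simp add: degree_map_poly rhom_eq_0_iff[OF h\<psi>])
  obtain r where r: "poly (map_poly \<psi> f) r = 0"
    using alg_closed_imp_poly_has_root[of "map_poly \<psi> f"] degF n by auto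
  have to_ac_g: "map_poly to_ac (pcompose (map_poly \<phi> f) [:\<beta>, \<alpha>:]) =
      pcompose (map_poly \<psi> f) [:to_ac \<beta>, to_ac \<alpha>:]"
    unfolding \<psi>_def
    by (simp add: map_poly_rhom_pcompose[of to_ac] rhom_def map_poly_map_poly rhomD[OF h] o_def
        map_poly_pCons)
  have Gv: "coeff (pcompose (map_poly \<psi> f) [:to_ac \<beta>, to_ac \<alpha>:]) i \<in> Fqv CARD('b) v" for i
    using gv[of i] arg_cong[OF to_ac_g, of "\<lambda>P. coeff P i", symmetric]
    by (simp add: coeff_map_poly to_ac_Fqv_iff)
  have "to_ac \<alpha> \<in> Fqv CARD('b) v \<and> to_ac \<beta> \<in> Fqv CARD('b) v"
    using affine_shift_in_Fqv[OF prC qC degF n cop coeff_map_poly_fixed[OF h\<psi>] r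
        root_period[OF h\<psi> prC qC irr deg r] _ _ _ v Gv] \<alpha>0 Fqv_card[OF card_a]
    by (simp add: to_ac_Fqv_iff)
  thus ?thesis by (simp add: to_ac_Fqv_iff)
qed

lemma coeffs_in_Fqv_iff:
  fixes \<phi> :: "'b::{field,finite} \<Rightarrow> 'a::{field,finite}" and f :: "'b poly" and \<alpha> \<beta> :: 'a
  assumes h: "rhom \<phi>" and pr: "prime CHAR('a)" and qe: "CARD('b) = CHAR('a) ^ e"
    and card_a: "CARD('a) = CARD('b) ^ k"
    and n: "n > 1" and cop: "coprime n k"
    and irr: "irreducible f" and deg: "degree f = n" and \<alpha>0: "\<alpha> \<noteq> 0"
    and v: "v dvd k"
  shows "{coeff (pcompose (map_poly \<phi> f) [:\<beta>, \<alpha>:]) i | i. i \<le> n} \<subseteq> Fqv CARD('b) v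
         \<longleftrightarrow> {\<alpha>, \<beta>} \<subseteq> Fqv CARD('b) v"
proof
  let ?g = "pcompose (map_poly \<phi> f) [:\<beta>, \<alpha>:]"
  assume low: "{coeff ?g i | i. i \<le> n} \<subseteq> Fqv CARD('b) v"
  have "degree ?g \<le> n" using deg by (simp add: degree_pcompose degree_map_poly rhom_eq_0_iff[OF h])
  hence "coeff ?g i \<in> Fqv CARD('b) v" for i
    using low by (cases "i \<le> n") (auto simp: coeff_eq_0 Fqv_def zero_power)
  hence "\<alpha> \<in> Fqv CARD('b) v \<and> \<beta> \<in> Fqv CARD('b) v"
    by (rule coeffs_in_Fqv_imp_shift[OF h pr qe card_a n cop irr deg \<alpha>0 v])
  thus "{\<alpha>, \<beta>} \<subseteq> Fqv CARD('b) v" by simp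
next
  assume "{\<alpha>, \<beta>} \<subseteq> Fqv CARD('b) v"
  thus "{coeff (pcompose (map_poly \<phi> f) [:\<beta>, \<alpha>:]) i | i. i \<le> n} \<subseteq> Fqv CARD('b) v"
    using shift_in_Fqv_imp_coeffs[OF h pr qe] by auto
qed

theorem mainTheorem4:
  fixes \<phi> :: "'b::{field,finite} \<Rightarrow> 'a::{field,finite}"
    and f :: "'b poly" and q n k :: nat and \<alpha> \<beta> :: 'a
  assumes q: "q = CARD('b)"
    and qpow: "\<exists>p m. prime p \<and> m > 0 \<and> q = p ^ m"
    and card_a: "CARD('a) = q ^ k"
    and hom_add: "\<And>x y. \<phi> (x + y) = \<phi> x + \<phi> y"
    and hom_mult: "\<And>x y. \<phi> (x * y) = \<phi> x * \<phi> y"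
    and hom_one: "\<phi> 1 = 1"
    and n: "n > 1" and k: "k \<ge> 1" and cop: "coprime n k"
    and irr: "irreducible f" and deg: "degree f = n"
    and alpha: "\<alpha> \<noteq> 0"
  shows "generates q k {coeff (pcompose (map_poly \<phi> f) [:\<beta>, \<alpha>:]) i | i. i \<le> n}
         \<longleftrightarrow> generates q k {\<alpha>, \<beta>}"
proof -
  obtain p e where pe: "prime p" "e > 0" "q = p ^ e" using qpow by auto
  have "\<phi> 0 = 0" using hom_add[of 0 0] by (metis add.right_neutral add_left_cancel)
  hence h: "rhom \<phi>" unfolding rhom_def using hom_one hom_add hom_mult by blast
  have "CHAR('a) = p"
    using rhom_CHAR[OF h] CHAR_prime_power_card[of p e] pe q by simp
  hence pr: "prime CHAR('a)" and qe: "CARD('b) = CHAR('a) ^ e" using pe q by simp_all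
  have all_k: "S \<subseteq> Fqv q k" for S :: "'a set" using Fqv_card[OF card_a] by blast
  show ?thesis
    unfolding generates_def q
    using coeffs_in_Fqv_iff[OF h pr qe card_a[unfolded q] n cop irr deg alpha] all_k[unfolded q]
    by blast
qed

end
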